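(* Let $\varepsilon\in(0,\varepsilon_0]$. The set $\mathbb D_\varepsilon$ is bounded in $\mathbf H$, with $\sup_{z\in\mathbb D_\varepsilon}\|z\|_{\mathbf H}^2\le\frac{4c_*}{\varepsilon}$. Moreover, for every bounded set $\mathcal B\subset\mathbf H$ one has $\mathcal B\subset\mathbb D_\varepsilon$ for all $\varepsilon\in(0,\varepsilon_0]$ sufficiently small (depending on $\sup_{z\in\mathcal B}\|z\|_{\mathbf H}$).
   Context: Let $\mathfrak I=(a,b)\subset\mathbb R$ be a bounded interval, $\mathcal H=L^2(\mathfrak I)$ with inner product $\langle\cdot,\cdot\rangle$ and norm $\|\cdot\|$. Let $A=-\partial_{xx}$ with domain $H^2(\mathfrak I)\cap H^1_0(\mathfrak I)$, $\lambda_1>0$ its first eigenvalue, $\mathcal H^r=D(A^{r/2})$, $\|u\|_r=\|A^{r/2}u\|$, $B=I+A$, and on $\mathcal H^r$ the inner product $(u,v)_r=\langle A^{(r-1)/2}B^{1/2}u,A^{(r-1)/2}B^{1/2}v\rangle$ with norm $|||u|||_r^2=\|u\|_{r-1}^2+\|u\|_r^2$. Set $\omega=\sqrt{(1+\lambda_1)/\lambda_1}$. Let $\mu:(0,\infty)\to[0,\infty)$, $\mu\not\equiv0$, nonincreasing, absolutely continuous, with $\kappa:=\int_0^\infty\mu(s)\,ds\in(0,\infty)$, $\int_0^\infty s\mu(s)\,ds=1$, $\lim_{s\to0^+}\mu(s)<\infty$, and $\mu'+\delta\mu\le0$ a.e. for some $\delta>0$. $\mathcal M=L^2_\mu(\mathbb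 R^+;\mathcal H^1)$ with norm $\|\eta\|_{\mathcal M}^2=\int_0^\infty\mu(s)\|\eta(s)\|_1^2ds$; $\mathbf H=\mathcal H^1\times\mathcal M$ with $\|(u,\eta)\|_{\mathbf H}^2=|||u|||_1^2+\|\eta\|_{\mathcal M}^2$. $T\eta=-\partial_s\eta$ with domain $\{\eta\in\mathcal M:\partial_s\eta\in\mathcal M,\ \lim_{s\to0}\|\eta(s)\|_1=0\}$. For $f\in L^2(\mathfrak I)$, $S(t)$ is the strongly continuous semigroup on $\mathbf H$ generated by $Bu_t+u_x+\int_0^\infty\mu(s)A\eta(s)\,ds+uu_x=f$, $\eta_t=T\eta+u$ (Dirichlet conditions on $u$), $S(t)z=(u(t),\eta^t)$. Let $F(x)=\int_a^xf(y)\,dy$ and for $\varepsilon>0$, $z=(u,\eta)\in\mathbf H$, $$\Lambda_\varepsilon(z)=\|z\|_{\mathbf H}^2+\frac2\kappa\int_0^\infty\mu(s)\langle F,\eta_x(s)\rangle\,ds+\frac2\kappa\|F\|^2-\frac{\varepsilon}{\sqrt\kappa}\int_0^\infty\mu(s)(u,\eta(s))_1\,ds.$$ Let $c_1,c_2,c_3>0$ and $\varepsilon_0\in(0,\frac1{2\omega})$ be constants depending only on $\mathfrak I,\mu$ such that for every $z\in\mathbf H$ and $\varepsilon\in(0,\varepsilon_0]$, $\mathcal L_\varepsilon(t)=\Lambda_\varepsilon(S(t)z)$ satisfies $\mathcal L_\varepsilon'+\varepsilon c_1\mathcal L_\varepsilon\le c_2\|F\|^2+c_3\varepsilon^2\mathcal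 L_\varepsilon^2$ for all $t\ge0$. Standing assumption: $\|F\|<\frac{c_1}{2\sqrt{c_2c_3}}$. Set $c_*=\sqrt{c_2/c_3}\,\big(\frac{c_1}{\sqrt{c_2c_3}}-\|F\|\big)>0$ and, for $\varepsilon\in(0,\varepsilon_0]$, $\mathbb D_\varepsilon=\{z\in\mathbf H:\Lambda_\varepsilon(z)\le c_*/\varepsilon\}$. *)

theory Defs
  imports "HOL-Analysis.Analysis"
begin

text \<open>Concrete setting on the interval (a,b). Functions are real-valued on the real line;
only their values on [a,b] matter. Derivatives are the pointwise (a.e.) derivatives.\<close>

definition L2ip :: "real \<Rightarrow> real \<Rightarrow> (real \<Rightarrow> real) \<Rightarrow> (real \<Rightarrow> real) \<Rightarrow> real" where
  "L2ip a b u v = (LINT x:{a..b}|lborel. u x * v x)"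

definition L2nrm :: "real \<Rightarrow> real \<Rightarrow> (real \<Rightarrow> real) \<Rightarrow> real" where
  "L2nrm a b u = sqrt (L2ip a b u u)"

definition L2fun :: "real \<Rightarrow> real \<Rightarrow> (real \<Rightarrow> real) \<Rightarrow> bool" where
  "L2fun a b u \<longleftrightarrow> set_borel_measurable lborel {a..b} u
      \<and> set_integrable lborel {a..b} (\<lambda>x. (u x)\<^sup>2)"

text \<open>H^1_0(a,b) = D(A^{1/2}): absolutely continuous functions with L^2 derivative
  vanishing at both endpoints.\<close>
definition H10 :: "real \<Rightarrow> real \<Rightarrow> (real \<Rightarrow> real) set" where
  "H10 a b = {u. L2fun a b (deriv u) \<and> u a = 0 \<and> u b = 0
      \<and> (\<forall>x\<in>{a..b}. u x = (LINT y:{a..x}|lborel. deriv u y))}"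

definition nrm1 :: "real \<Rightarrow> real \<Rightarrow> (real \<Rightarrow> real) \<Rightarrow> real" where
  "nrm1 a b u = L2nrm a b (deriv u)"

definition ip1 :: "real \<Rightarrow> real \<Rightarrow> (real \<Rightarrow> real) \<Rightarrow> (real \<Rightarrow> real) \<Rightarrow> real" where
  "ip1 a b u v = L2ip a b u v + L2ip a b (deriv u) (deriv v)"

definition tnrm1sq :: "real \<Rightarrow> real \<Rightarrow> (real \<Rightarrow> real) \<Rightarrow> real" where
  "tnrm1sq a b u = (L2nrm a b u)\<^sup>2 + (nrm1 a b u)\<^sup>2"

text \<open>Memory space M = L^2_mu(R^+; H^1); eta s x is the value of eta(s) at x.\<close>
definition Mspace :: "real \<Rightarrow> real \<Rightarrow> (real \<Rightarrow> real) \<Rightarrow> (real \<Rightarrow> real \<Rightarrow> real) set" where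
  "Mspace a b \<mu> = {\<eta>. (\<forall>s>0. \<eta> s \<in> H10 a b)
      \<and> set_borel_measurable (lborel \<Otimes>\<^sub>M lborel) ({0<..} \<times> {a..b}) (\<lambda>(s,x). \<eta> s x)
      \<and> set_borel_measurable (lborel \<Otimes>\<^sub>M lborel) ({0<..} \<times> {a..b}) (\<lambda>(s,x). deriv (\<eta> s) x)
      \<and> set_integrable lborel {0<..} (\<lambda>s. \<mu> s * (nrm1 a b (\<eta> s))\<^sup>2)}"

definition Mnsq :: "real \<Rightarrow> real \<Rightarrow> (real \<Rightarrow> real) \<Rightarrow> (real \<Rightarrow> real \<Rightarrow> real) \<Rightarrow> real" where
  "Mnsq a b \<mu> \<eta> = (LINT s:{0<..}|lborel. \<mu> s * (nrm1 a b (\<eta> s))\<^sup>2)"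

definition Hspace :: "real \<Rightarrow> real \<Rightarrow> (real \<Rightarrow> real)
    \<Rightarrow> ((real \<Rightarrow> real) \<times> (real \<Rightarrow> real \<Rightarrow> real)) set" where
  "Hspace a b \<mu> = H10 a b \<times> Mspace a b \<mu>"

definition Hnsq :: "real \<Rightarrow> real \<Rightarrow> (real \<Rightarrow> real)
    \<Rightarrow> (real \<Rightarrow> real) \<times> (real \<Rightarrow> real \<Rightarrow> real) \<Rightarrow> real" where
  "Hnsq a b \<mu> z = tnrm1sq a b (fst z) + Mnsq a b \<mu> (snd z)"

definition kappa :: "(real \<Rightarrow> real) \<Rightarrow> real" where
  "kappa \<mu> = (LINT s:{0<..}|lborel. \<mu> s)"

definition Fprim :: "real \<Rightarrow> (real \<Rightarrow> real) \<Rightarrow> real \<Rightarrow> real" where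
  "Fprim a f x = (LINT y:{a..x}|lborel. f y)"

text \<open>First Dirichlet eigenvalue of -d^2/dx^2 on (a,b).\<close>
definition lambda1 :: "real \<Rightarrow> real \<Rightarrow> real" where
  "lambda1 a b = (pi / (b - a))\<^sup>2"

definition omega :: "real \<Rightarrow> real \<Rightarrow> real" where
  "omega a b = sqrt ((1 + lambda1 a b) / lambda1 a b)"

definition Lambda :: "real \<Rightarrow> real \<Rightarrow> (real \<Rightarrow> real) \<Rightarrow> (real \<Rightarrow> real) \<Rightarrow> real
    \<Rightarrow> (real \<Rightarrow> real) \<times> (real \<Rightarrow> real \<Rightarrow> real) \<Rightarrow> real" where
  "Lambda a b f \<mu> \<epsilon> z =
     Hnsq a b \<mu> z
     + 2 / kappa \<mu> * (LINT s:{0<..}|lborel. \<mu> s * L2ip a b (Fprim a f) (deriv (snd z s)))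
     + 2 / kappa \<mu> * (L2nrm a b (Fprim a f))\<^sup>2
     - \<epsilon> / sqrt (kappa \<mu>) * (LINT s:{0<..}|lborel. \<mu> s * ip1 a b (fst z) (snd z s))"

definition cstar :: "real \<Rightarrow> real \<Rightarrow> (real \<Rightarrow> real) \<Rightarrow> real \<Rightarrow> real \<Rightarrow> real \<Rightarrow> real" where
  "cstar a b f c1 c2 c3 =
     sqrt (c2 / c3) * (c1 / sqrt (c2 * c3) - L2nrm a b (Fprim a f))"

definition Dset :: "real \<Rightarrow> real \<Rightarrow> (real \<Rightarrow> real) \<Rightarrow> (real \<Rightarrow> real) \<Rightarrow> real \<Rightarrow> real \<Rightarrow> real \<Rightarrow> real
    \<Rightarrow> ((real \<Rightarrow> real) \<times> (real \<Rightarrow> real \<Rightarrow> real)) set" where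
  "Dset a b f \<mu> c1 c2 c3 \<epsilon> =
     {z \<in> Hspace a b \<mu>. Lambda a b f \<mu> \<epsilon> z \<le> cstar a b f c1 c2 c3 / \<epsilon>}"

end

theory Submission
  imports Defs
begin

text \<open>
  The functional \<open>\<Lambda>\<^sub>\<epsilon>\<close> is equivalent to the squared phase-space norm, uniformly in
  \<open>\<epsilon> \<le> \<epsilon>\<^sub>0\<close>. Cauchy--Schwarz in \<open>L\<^sup>2(a,b)\<close> and in \<open>L\<^sup>2\<^sub>\<mu>\<close>, together with the Poincare
  inequality \<open>\<parallel>u\<parallel>\<^sup>2 \<le> (b-a)\<^sup>2/6 \<parallel>u\<^sub>x\<parallel>\<^sup>2\<close>, bound the two cross terms of \<open>\<Lambda>\<^sub>\<epsilon>\<close> by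
  \<open>\<parallel>F\<parallel> \<surd>\<kappa> \<parallel>\<eta>\<parallel>\<^sub>M\<close> and \<open>\<epsilon> (\<sigma> \<parallel>u\<parallel> + \<parallel>u\<parallel>\<^sub>1) \<surd>\<kappa> \<parallel>\<eta>\<parallel>\<^sub>M\<close> with \<open>\<sigma> = (b-a)/\<surd>6\<close>; since
  \<open>\<epsilon> < 1/(2\<omega>)\<close> forces \<open>\<epsilon>\<^sup>2(\<sigma>\<^sup>2+1) \<le> 3/4\<close>, completing squares gives
  \<open>\<parallel>z\<parallel>\<^sup>2/4 \<le> \<Lambda>\<^sub>\<epsilon>(z) \<le> 3\<parallel>z\<parallel>\<^sup>2 + 3\<parallel>F\<parallel>\<^sup>2/\<kappa>\<close>. The lower bound bounds \<open>D\<^sub>\<epsilon>\<close>; the upper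
  bound puts every set with \<open>\<parallel>z\<parallel>\<^sup>2 \<le> R\<close> into \<open>D\<^sub>\<epsilon>\<close> once \<open>\<epsilon> \<le> c\<^sub>*/(3R + 3\<parallel>F\<parallel>\<^sup>2/\<kappa> + 1)\<close>.
\<close>

lemma set_integral_nonneg:
  fixes f :: "'a \<Rightarrow> real"
  assumes "\<And>x. x \<in> A \<Longrightarrow> 0 \<le> f x"
  shows "0 \<le> (LINT x:A|M. f x)"
  unfolding set_lebesgue_integral_def
  by (intro integral_nonneg_AE AE_I2) (simp add: assms indicator_def)

text \<open>No integrability of \<open>f\<close> is needed: a non-integrable \<open>f\<close> has integral \<open>0\<close>.\<close>
lemma set_integral_abs_le:
  fixes f g :: "'a \<Rightarrow> real"
  assumes fg: "\<And>x. x \<in> A \<Longrightarrow> \<bar>f x\<bar> \<le> g x" and g: "set_integrable M A g"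
  shows "\<bar>LINT x:A|M. f x\<bar> \<le> (LINT x:A|M. g x)"
proof (cases "set_integrable M A f")
  case True
  have "(LINT x:A|M. f x) \<le> (LINT x:A|M. g x)"
    by (rule set_integral_mono[OF True g]) (use fg in force)
  moreover have "- (LINT x:A|M. f x) \<le> (LINT x:A|M. g x)"
    unfolding set_integral_uminus[OF True, symmetric]
    by (rule set_integral_mono) (use True g fg in \<open>auto simp: set_integrable_def abs_le_iff\<close>)
  ultimately show ?thesis by linarith
next
  case False
  then have "(LINT x:A|M. f x) = 0"
    by (simp add: set_lebesgue_integral_def set_integrable_def not_integrable_integral_eq)
  moreover have "0 \<le> (LINT x:A|M. g x)"
    by (rule set_integral_nonneg) (use fg in fastforce)
  ultimately show ?thesis by simp
qed

lemma le_sqrt_mult_of_AM_GM: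
  fixes A B X :: real
  assumes A: "0 \<le> A" and B: "0 \<le> B" and AM_GM: "\<And>t. 0 < t \<Longrightarrow> X \<le> (t * A + B / t) / 2"
  shows "X \<le> sqrt A * sqrt B"
proof (cases "0 < A \<and> 0 < B")
  case True
  then have "X \<le> (sqrt B / sqrt A * A + B / (sqrt B / sqrt A)) / 2"
    by (intro AM_GM) simp
  also have "\<dots> = sqrt A * sqrt B"
    using True A B by (simp add: field_simps)
  finally show ?thesis .
next
  case False
  have poly: "2 * t * X \<le> t\<^sup>2 * A + B" if "0 < t" for t
    using AM_GM[OF that] that by (simp add: field_simps power2_eq_square)
  show ?thesis
  proof (rule ccontr)
    assume "\<not> ?thesis"
    moreover have "0 \<le> sqrt A * sqrt B" using A B by simp
    ultimately have X: "0 < X" by linarith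
    show False
    proof (cases "A = 0")
      case True
      then show False using poly[of "(B + 1) / X"] X B by (simp add: add_nonneg_pos)
    next
      case False
      then have "0 < A" "B = 0" using \<open>\<not> (0 < A \<and> 0 < B)\<close> A B by auto
      then show False using poly[of "X / A"] X by (simp add: field_simps power2_eq_square)
    qed
  qed
qed

text \<open>Optimising the pointwise AM--GM bound over \<open>t\<close> after integrating avoids any
  measurability assumption on \<open>T\<close>, \<open>u\<close>, \<open>v\<close>.\<close>
lemma set_integral_abs_le_weighted_Cauchy_Schwarz:
  fixes T w u v :: "'a \<Rightarrow> real"
  assumes w: "\<And>x. x \<in> A \<Longrightarrow> 0 \<le> w x"
    and T: "\<And>x. x \<in> A \<Longrightarrow> \<bar>T x\<bar> \<le> w x * u x * v x"
    and u: "set_integrable M A (\<lambda>x. w x * (u x)\<^sup>2)"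
    and v: "set_integrable M A (\<lambda>x. w x * (v x)\<^sup>2)"
  shows "\<bar>LINT x:A|M. T x\<bar>
           \<le> sqrt (LINT x:A|M. w x * (u x)\<^sup>2) * sqrt (LINT x:A|M. w x * (v x)\<^sup>2)"
proof (rule le_sqrt_mult_of_AM_GM)
  show "0 \<le> (LINT x:A|M. w x * (u x)\<^sup>2)" "0 \<le> (LINT x:A|M. w x * (v x)\<^sup>2)"
    using w by (auto intro!: set_integral_nonneg)
  fix t :: real assume t: "0 < t"
  let ?g = "\<lambda>x. t / 2 * (w x * (u x)\<^sup>2) + 1 / (2 * t) * (w x * (v x)\<^sup>2)"
  have "\<bar>LINT x:A|M. T x\<bar> \<le> (LINT x:A|M. ?g x)"
  proof (rule set_integral_abs_le)
    show "set_integrable M A ?g" using u v by auto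
    fix x assume x: "x \<in> A"
    have "0 \<le> w x * (t * u x - v x)\<^sup>2 / (2 * t)" using w[OF x] t by simp
    also have "\<dots> = ?g x - w x * u x * v x"
      using t by (simp add: field_simps power2_eq_square)
    finally show "\<bar>T x\<bar> \<le> ?g x" using T[OF x] by linarith
  qed
  also have "\<dots> = (t * (LINT x:A|M. w x * (u x)\<^sup>2) + (LINT x:A|M. w x * (v x)\<^sup>2) / t) / 2"
    using u v by (simp add: set_integral_add(2) field_simps)
  finally show "\<bar>LINT x:A|M. T x\<bar>
      \<le> (t * (LINT x:A|M. w x * (u x)\<^sup>2) + (LINT x:A|M. w x * (v x)\<^sup>2) / t) / 2" .
qed

lemma set_integral_abs_le_Cauchy_Schwarz:
  fixes T u v :: "'a \<Rightarrow> real"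
  assumes "\<And>x. x \<in> A \<Longrightarrow> \<bar>T x\<bar> \<le> u x * v x"
    and "set_integrable M A (\<lambda>x. (u x)\<^sup>2)" "set_integrable M A (\<lambda>x. (v x)\<^sup>2)"
  shows "\<bar>LINT x:A|M. T x\<bar> \<le> sqrt (LINT x:A|M. (u x)\<^sup>2) * sqrt (LINT x:A|M. (v x)\<^sup>2)"
  using set_integral_abs_le_weighted_Cauchy_Schwarz[of A "\<lambda>_. 1" T u v M] assms by simp

lemma square_set_integral_le:
  fixes g :: "'a \<Rightarrow> real"
  assumes A: "A \<in> sets M" "emeasure M A \<noteq> \<infinity>" and g: "set_integrable M A (\<lambda>x. (g x)\<^sup>2)"
  shows "(LINT x:A|M. g x)\<^sup>2 \<le> measure M A * (LINT x:A|M. (g x)\<^sup>2)"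
proof -
  have one: "set_integrable M A (\<lambda>x. (1::real)\<^sup>2)"
    using A by (simp add: set_integrable_def integrable_real_indicator top.not_eq_extremum)
  have "\<bar>LINT x:A|M. g x\<bar> \<le> sqrt (LINT x:A|M. (1::real)\<^sup>2) * sqrt (LINT x:A|M. (g x)\<^sup>2)"
    using set_integral_abs_le_Cauchy_Schwarz[of A g "\<lambda>_. 1" "\<lambda>x. \<bar>g x\<bar>"] one g by simp
  also have "(LINT x:A|M. (1::real)\<^sup>2) = measure M A"
    using A by (simp add: set_integral_const)
  finally have "\<bar>LINT x:A|M. g x\<bar>\<^sup>2 \<le> (sqrt (measure M A) * sqrt (LINT x:A|M. (g x)\<^sup>2))\<^sup>2"
    by (rule power_mono) simp
  then show ?thesis
    using set_integral_nonneg[of A "\<lambda>x. (g x)\<^sup>2" M] by (simp add: power_mult_distrib)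
qed

lemma L2fun_set_integrable:
  assumes "L2fun a b g"
  shows "set_integrable lborel {a..b} g"
  unfolding set_integrable_def
proof (rule Bochner_Integration.integrable_bound)
  have "set_integrable lborel {a..b} (\<lambda>x. 1::real)"
    unfolding set_integrable_def by (rule borel_integrable_compact) auto
  then have "set_integrable lborel {a..b} (\<lambda>x. 1 + (g x)\<^sup>2)"
    using assms by (intro set_integral_add) (simp_all add: L2fun_def)
  then show "integrable lborel (\<lambda>x. indicator {a..b} x *\<^sub>R (1 + (g x)\<^sup>2))"
    by (simp add: set_integrable_def)
  show "(\<lambda>x. indicator {a..b} x *\<^sub>R g x) \<in> borel_measurable lborel"
    using assms by (simp add: L2fun_def set_borel_measurable_def)
  have "\<bar>y\<bar> \<le> 1 + y\<^sup>2" for y :: real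
  proof (cases "\<bar>y\<bar> \<le> 1")
    case False
    then have "\<bar>y\<bar> * 1 \<le> \<bar>y\<bar> * \<bar>y\<bar>" by (intro mult_left_mono) auto
    then show ?thesis by (simp add: power2_eq_square)
  qed (simp add: add_increasing2)
  then show "AE x in lborel. norm (indicator {a..b} x *\<^sub>R g x)
      \<le> norm (indicator {a..b} x *\<^sub>R (1 + (g x)\<^sup>2))"
    by (intro AE_I2) (simp add: indicator_def)
qed

lemma continuous_on_indefinite_set_integral:
  fixes g :: "real \<Rightarrow> real"
  assumes g: "set_integrable lborel {a..b} g"
  shows "continuous_on {a..b} (\<lambda>x. LINT y:{a..x}|lborel. g y)"
proof (rule continuous_on_eq)
  show "continuous_on {a..b} (\<lambda>x. integral {a..x} g)"
    by (rule indefinite_integral_continuous_1[OF set_borel_integral_eq_integral(1)[OF g]])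
  fix x assume "x \<in> {a..b}"
  then have "set_integrable lborel {a..x} g"
    by (intro set_integrable_subset[OF g]) auto
  then show "integral {a..x} g = (LINT y:{a..x}|lborel. g y)"
    by (simp add: set_borel_integral_eq_integral(2))
qed

lemma continuous_on_square_set_integrable:
  fixes u :: "real \<Rightarrow> real"
  assumes "continuous_on {a..b} u"
  shows "set_integrable lborel {a..b} (\<lambda>x. (u x)\<^sup>2)"
  unfolding set_integrable_def
  by (rule borel_integrable_compact) (auto intro!: continuous_intros assms)

lemma H10_continuous_on: "u \<in> H10 a b \<Longrightarrow> continuous_on {a..b} u"
  by (rule continuous_on_eq[OF continuous_on_indefinite_set_integral[OF L2fun_set_integrable]])
    (auto simp: H10_def)

lemma H10_square_integrable: "u \<in> H10 a b \<Longrightarrow> set_integrable lborel {a..b} (\<lambda>x. (u x)\<^sup>2)"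
  by (rule continuous_on_square_set_integrable[OF H10_continuous_on])

lemma H10_deriv_square_integrable:
  "u \<in> H10 a b \<Longrightarrow> set_integrable lborel {a..b} (\<lambda>x. (deriv u x)\<^sup>2)"
  by (simp add: H10_def L2fun_def)

lemma Fprim_square_integrable:
  "L2fun a b f \<Longrightarrow> set_integrable lborel {a..b} (\<lambda>x. (Fprim a f x)\<^sup>2)"
  unfolding Fprim_def
  by (rule continuous_on_square_set_integrable[OF continuous_on_indefinite_set_integral[OF L2fun_set_integrable]])

lemma set_integral_Icc_split:
  fixes g :: "real \<Rightarrow> real"
  assumes g: "set_integrable lborel {a..b} g" and x: "x \<in> {a..b}"
  shows "(LINT y:{a..b}|lborel. g y) = (LINT y:{a..x}|lborel. g y) + (LINT y:{x<..b}|lborel. g y)"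
proof -
  have "{a..b} = {a..x} \<union> {x<..b}" "{a..x} \<inter> {x<..b} = {}" using x by auto
  then show ?thesis
    using set_integral_Un[of "{a..x}" "{x<..b}" lborel g] x
      set_integrable_subset[OF g, of "{a..x}"] set_integrable_subset[OF g, of "{x<..b}"]
    by auto
qed

lemma H10_square_le_left:
  assumes u: "u \<in> H10 a b" and x: "x \<in> {a..b}"
  shows "(u x)\<^sup>2 \<le> (x - a) * (LINT y:{a..x}|lborel. (deriv u y)\<^sup>2)"
proof -
  have "u x = (LINT y:{a..x}|lborel. deriv u y)" using u x by (simp add: H10_def)
  moreover have "set_integrable lborel {a..x} (\<lambda>y. (deriv u y)\<^sup>2)"
    by (rule set_integrable_subset[OF H10_deriv_square_integrable[OF u]]) (use x in auto)
  ultimately show ?thesis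
    using square_set_integral_le[of "{a..x}" lborel "deriv u"] x by simp
qed

lemma H10_square_le_right:
  assumes u: "u \<in> H10 a b" and x: "x \<in> {a..b}"
  shows "(u x)\<^sup>2 \<le> (b - x) * (LINT y:{x<..b}|lborel. (deriv u y)\<^sup>2)"
proof -
  have "set_integrable lborel {a..b} (deriv u)"
    using u by (intro L2fun_set_integrable) (simp add: H10_def)
  then have "(LINT y:{a..b}|lborel. deriv u y)
      = (LINT y:{a..x}|lborel. deriv u y) + (LINT y:{x<..b}|lborel. deriv u y)"
    by (rule set_integral_Icc_split[OF _ x])
  moreover have "u b = (LINT y:{a..b}|lborel. deriv u y)" "u x = (LINT y:{a..x}|lborel. deriv u y)"
    "u b = 0" using u x by (auto simp: H10_def)
  ultimately have "u x = - (LINT y:{x<..b}|lborel. deriv u y)"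
    by linarith
  then have "(u x)\<^sup>2 = (LINT y:{x<..b}|lborel. deriv u y)\<^sup>2"
    by simp
  moreover have "set_integrable lborel {x<..b} (\<lambda>y. (deriv u y)\<^sup>2)"
    by (rule set_integrable_subset[OF H10_deriv_square_integrable[OF u]]) (use x in auto)
  ultimately show ?thesis
    using square_set_integral_le[of "{x<..b}" lborel "deriv u"] x by simp
qed

lemma H10_square_le_parabola:
  assumes u: "u \<in> H10 a b" and x: "x \<in> {a..b}"
  shows "(b - a) * (u x)\<^sup>2 \<le> (x - a) * (b - x) * (LINT y:{a..b}|lborel. (deriv u y)\<^sup>2)"
proof -
  let ?l = "LINT y:{a..x}|lborel. (deriv u y)\<^sup>2" and ?r = "LINT y:{x<..b}|lborel. (deriv u y)\<^sup>2"
  have split: "(LINT y:{a..b}|lborel. (deriv u y)\<^sup>2) = ?l + ?r"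
    by (rule set_integral_Icc_split[OF H10_deriv_square_integrable[OF u] x])
  have "(b - x) * (u x)\<^sup>2 \<le> (b - x) * ((x - a) * ?l)"
    using H10_square_le_left[OF u x] x by (intro mult_left_mono) auto
  moreover have "(x - a) * (u x)\<^sup>2 \<le> (x - a) * ((b - x) * ?r)"
    using H10_square_le_right[OF u x] x by (intro mult_left_mono) auto
  ultimately show ?thesis
    unfolding split by (simp add: algebra_simps)
qed

lemma set_integral_parabola:
  fixes a b :: real
  assumes "a \<le> b"
  shows "(LINT x:{a..b}|lborel. (x - a) * (b - x)) = (b - a) ^ 3 / 6"
proof -
  define G where "G x = (b - a) * (x - a)\<^sup>2 / 2 - (x - a) ^ 3 / 3" for x :: real
  have "(G has_real_derivative (x - a) * (b - x)) (at x)" for x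
    unfolding G_def by (auto intro!: derivative_eq_intros simp: field_simps power2_eq_square eval_nat_numeral)
  then have "(LINT x:{a..b}|lborel. (x - a) * (b - x)) = G b - G a"
    unfolding set_lebesgue_integral_def
    by (intro integral_FTC_atLeastAtMost assms continuous_intros)
      (simp add: has_real_derivative_iff_has_vector_derivative[symmetric] has_field_derivative_at_within)
  also have "\<dots> = (b - a) ^ 3 / 6"
    by (simp add: G_def power2_eq_square power3_eq_cube field_simps)
  finally show ?thesis .
qed

lemma H10_Poincare:
  assumes u: "u \<in> H10 a b" and ab: "a < b"
  shows "(LINT x:{a..b}|lborel. (u x)\<^sup>2) \<le> (b - a)\<^sup>2 / 6 * (LINT x:{a..b}|lborel. (deriv u x)\<^sup>2)"
proof -
  define K where "K = (LINT x:{a..b}|lborel. (deriv u x)\<^sup>2)"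
  have "(b - a) * (LINT x:{a..b}|lborel. (u x)\<^sup>2) = (LINT x:{a..b}|lborel. (b - a) * (u x)\<^sup>2)"
    by simp
  also have "\<dots> \<le> (LINT x:{a..b}|lborel. (x - a) * (b - x) * K)"
  proof (rule set_integral_mono)
    show "set_integrable lborel {a..b} (\<lambda>x. (b - a) * (u x)\<^sup>2)"
      using H10_square_integrable[OF u] by simp
    show "set_integrable lborel {a..b} (\<lambda>x. (x - a) * (b - x) * K)"
      unfolding set_integrable_def by (rule borel_integrable_compact) (auto intro!: continuous_intros)
  qed (use H10_square_le_parabola[OF u] in \<open>simp add: K_def\<close>)
  also have "\<dots> = (b - a) * ((b - a)\<^sup>2 / 6 * K)"
    using set_integral_parabola[of a b] ab by (simp add: power3_eq_cube power2_eq_square)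
  finally show ?thesis
    using ab by (simp add: K_def)
qed

lemma L2nrm_nonneg: "0 \<le> L2nrm a b v"
  unfolding L2nrm_def L2ip_def by (simp add: set_integral_nonneg)

lemma L2nrm_square: "(L2nrm a b v)\<^sup>2 = (LINT x:{a..b}|lborel. (v x)\<^sup>2)"
  unfolding L2nrm_def L2ip_def by (simp add: set_integral_nonneg power2_eq_square)

lemma abs_L2ip_le:
  assumes "set_integrable lborel {a..b} (\<lambda>x. (v x)\<^sup>2)" "set_integrable lborel {a..b} (\<lambda>x. (w x)\<^sup>2)"
  shows "\<bar>L2ip a b v w\<bar> \<le> L2nrm a b v * L2nrm a b w"
  using set_integral_abs_le_Cauchy_Schwarz[of "{a..b}" "\<lambda>x. v x * w x" "\<lambda>x. \<bar>v x\<bar>" "\<lambda>x. \<bar>w x\<bar>"] assms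
  by (simp add: L2ip_def L2nrm_def abs_mult power2_eq_square)

lemma L2nrm_le_Poincare:
  assumes "u \<in> H10 a b" "a < b"
  shows "L2nrm a b u \<le> (b - a) / sqrt 6 * nrm1 a b u"
proof (rule power2_le_imp_le)
  show "(L2nrm a b u)\<^sup>2 \<le> ((b - a) / sqrt 6 * nrm1 a b u)\<^sup>2"
    using H10_Poincare[OF assms] by (simp add: L2nrm_square nrm1_def power_mult_distrib power_divide)
  show "0 \<le> (b - a) / sqrt 6 * nrm1 a b u"
    using assms(2) by (simp add: nrm1_def L2nrm_nonneg)
qed

lemma abs_ip1_le:
  assumes u: "u \<in> H10 a b" and v: "v \<in> H10 a b" and ab: "a < b"
  shows "\<bar>ip1 a b u v\<bar> \<le> ((b - a) / sqrt 6 * L2nrm a b u + nrm1 a b u) * nrm1 a b v"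
proof -
  have "\<bar>L2ip a b u v\<bar> \<le> L2nrm a b u * L2nrm a b v"
    by (rule abs_L2ip_le[OF H10_square_integrable[OF u] H10_square_integrable[OF v]])
  also have "\<dots> \<le> L2nrm a b u * ((b - a) / sqrt 6 * nrm1 a b v)"
    by (rule mult_left_mono[OF L2nrm_le_Poincare[OF v ab] L2nrm_nonneg])
  finally have "\<bar>L2ip a b u v\<bar> \<le> L2nrm a b u * ((b - a) / sqrt 6 * nrm1 a b v)" .
  moreover have "\<bar>L2ip a b (deriv u) (deriv v)\<bar> \<le> nrm1 a b u * nrm1 a b v"
    unfolding nrm1_def
    by (rule abs_L2ip_le[OF H10_deriv_square_integrable[OF u] H10_deriv_square_integrable[OF v]])
  ultimately show ?thesis
    unfolding ip1_def by (simp add: algebra_simps)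
qed

lemma Mnsq_nonneg: "\<forall>s>0. 0 \<le> \<mu> s \<Longrightarrow> 0 \<le> Mnsq a b \<mu> \<eta>"
  unfolding Mnsq_def by (rule set_integral_nonneg) simp

lemma abs_memory_integral_le:
  fixes T \<mu> :: "real \<Rightarrow> real"
  assumes \<mu>: "\<forall>s>0. 0 \<le> \<mu> s" "set_integrable lborel {0<..} \<mu>" and \<eta>: "\<eta> \<in> Mspace a b \<mu>"
    and C: "0 \<le> C" and T: "\<And>s. 0 < s \<Longrightarrow> \<bar>T s\<bar> \<le> \<mu> s * C * nrm1 a b (\<eta> s)"
  shows "\<bar>LINT s:{0<..}|lborel. T s\<bar> \<le> C * sqrt (kappa \<mu>) * sqrt (Mnsq a b \<mu> \<eta>)"
proof -
  have "set_integrable lborel {0<..} (\<lambda>s. \<mu> s * C\<^sup>2)"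
    using \<mu>(2) by (simp add: mult.commute[of _ "C\<^sup>2"])
  moreover have "set_integrable lborel {0<..} (\<lambda>s. \<mu> s * (nrm1 a b (\<eta> s))\<^sup>2)"
    using \<eta> by (simp add: Mspace_def)
  ultimately have "\<bar>LINT s:{0<..}|lborel. T s\<bar>
      \<le> sqrt (LINT s:{0<..}|lborel. \<mu> s * C\<^sup>2) * sqrt (Mnsq a b \<mu> \<eta>)"
    unfolding Mnsq_def using \<mu>(1) T
    by (intro set_integral_abs_le_weighted_Cauchy_Schwarz[where u = "\<lambda>_. C"]) auto
  also have "sqrt (LINT s:{0<..}|lborel. \<mu> s * C\<^sup>2) = C * sqrt (kappa \<mu>)"
    using C by (simp add: kappa_def mult.commute[of _ "C\<^sup>2"] real_sqrt_mult)
  finally show ?thesis .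
qed

lemma Hspace_forcing_term_le:
  assumes f: "L2fun a b f" and \<mu>: "\<forall>s>0. 0 \<le> \<mu> s" "set_integrable lborel {0<..} \<mu>"
    and z: "z \<in> Hspace a b \<mu>"
  shows "\<bar>LINT s:{0<..}|lborel. \<mu> s * L2ip a b (Fprim a f) (deriv (snd z s))\<bar>
           \<le> L2nrm a b (Fprim a f) * sqrt (kappa \<mu>) * sqrt (Mnsq a b \<mu> (snd z))"
proof (rule abs_memory_integral_le[OF \<mu>])
  show \<eta>: "snd z \<in> Mspace a b \<mu>" using z by (auto simp: Hspace_def)
  fix s :: real assume s: "0 < s"
  have "snd z s \<in> H10 a b" using \<eta> s by (simp add: Mspace_def)
  then have "\<bar>L2ip a b (Fprim a f) (deriv (snd z s))\<bar> \<le> L2nrm a b (Fprim a f) * nrm1 a b (snd z s)"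
    unfolding nrm1_def
    by (intro abs_L2ip_le Fprim_square_integrable[OF f] H10_deriv_square_integrable)
  then show "\<bar>\<mu> s * L2ip a b (Fprim a f) (deriv (snd z s))\<bar>
      \<le> \<mu> s * L2nrm a b (Fprim a f) * nrm1 a b (snd z s)"
    using \<mu>(1) s by (simp add: abs_mult mult.assoc mult_left_mono)
qed (rule L2nrm_nonneg)

lemma Hspace_coupling_term_le:
  assumes ab: "a < b" and \<mu>: "\<forall>s>0. 0 \<le> \<mu> s" "set_integrable lborel {0<..} \<mu>"
    and z: "z \<in> Hspace a b \<mu>"
  shows "\<bar>LINT s:{0<..}|lborel. \<mu> s * ip1 a b (fst z) (snd z s)\<bar>
           \<le> ((b - a) / sqrt 6 * L2nrm a b (fst z) + nrm1 a b (fst z))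
              * sqrt (kappa \<mu>) * sqrt (Mnsq a b \<mu> (snd z))"
proof (rule abs_memory_integral_le[OF \<mu>])
  have u: "fst z \<in> H10 a b" using z by (simp add: Hspace_def mem_Times_iff)
  show \<eta>: "snd z \<in> Mspace a b \<mu>" using z by (simp add: Hspace_def mem_Times_iff)
  show "0 \<le> (b - a) / sqrt 6 * L2nrm a b (fst z) + nrm1 a b (fst z)"
    using ab by (simp add: nrm1_def L2nrm_nonneg)
  fix s :: real assume s: "0 < s"
  have "snd z s \<in> H10 a b" using \<eta> s by (simp add: Mspace_def)
  from abs_ip1_le[OF u this ab]
  show "\<bar>\<mu> s * ip1 a b (fst z) (snd z s)\<bar>
      \<le> \<mu> s * ((b - a) / sqrt 6 * L2nrm a b (fst z) + nrm1 a b (fst z)) * nrm1 a b (snd z s)"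
    using \<mu>(1) s by (simp add: abs_mult mult.assoc mult_left_mono)
qed

lemma mult_le_three_quarter_square_add:
  fixes x y :: real
  shows "x * y \<le> 3/4 * x\<^sup>2 + y\<^sup>2 / 3"
proof -
  have "0 \<le> (3 * x - 2 * y)\<^sup>2" by simp
  then show ?thesis by (simp add: power2_eq_square algebra_simps)
qed

lemma cross_term_le_of_small:
  fixes e \<sigma> p q Y :: real
  assumes small: "e\<^sup>2 * (\<sigma>\<^sup>2 + 1) \<le> 3/4"
  shows "e * (\<sigma> * p + q) * Y \<le> 3/4 * (p\<^sup>2 + q\<^sup>2) + Y\<^sup>2 / 4"
proof -
  have "p * (e * \<sigma> * Y) \<le> 3/4 * p\<^sup>2 + (e * \<sigma> * Y)\<^sup>2 / 3"
    and "q * (e * Y) \<le> 3/4 * q\<^sup>2 + (e * Y)\<^sup>2 / 3"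
    by (rule mult_le_three_quarter_square_add)+
  moreover have "e\<^sup>2 * (\<sigma>\<^sup>2 + 1) * Y\<^sup>2 \<le> 3/4 * Y\<^sup>2"
    by (rule mult_right_mono[OF small]) simp
  ultimately show ?thesis
    by (simp add: algebra_simps power_mult_distrib)
qed

lemma perturbed_energy_bounds:
  fixes k p q Y F e \<sigma> I1 I2 :: real
  assumes k: "0 < k" and e: "0 < e" and small: "e\<^sup>2 * (\<sigma>\<^sup>2 + 1) \<le> 3/4"
    and I1: "\<bar>I1\<bar> \<le> F * sqrt k * Y" and I2: "\<bar>I2\<bar> \<le> (\<sigma> * p + q) * sqrt k * Y"
  shows "(p\<^sup>2 + q\<^sup>2 + Y\<^sup>2) / 4 \<le> p\<^sup>2 + q\<^sup>2 + Y\<^sup>2 + 2 / k * I1 + 2 / k * F\<^sup>2 - e / sqrt k * I2"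
    and "p\<^sup>2 + q\<^sup>2 + Y\<^sup>2 + 2 / k * I1 + 2 / k * F\<^sup>2 - e / sqrt k * I2
           \<le> 3 * (p\<^sup>2 + q\<^sup>2 + Y\<^sup>2) + 3 * (F\<^sup>2 / k)"
proof -
  define r where "r = F / sqrt k"
  have sk: "0 < sqrt k" "sqrt k * sqrt k = k" using k by simp_all
  have F2: "2 / k * F\<^sup>2 = 2 * r\<^sup>2" and r2: "F\<^sup>2 / k = r\<^sup>2"
    using sk by (simp_all add: r_def power_divide power2_eq_square)
  have "\<bar>2 / k * I1\<bar> \<le> 2 / k * (F * sqrt k * Y)"
    using I1 k by (auto simp: abs_mult intro!: divide_right_mono)
  also have "\<dots> = 2 * r * Y" using sk by (simp add: r_def field_simps)
  finally have I1': "\<bar>2 / k * I1\<bar> \<le> 2 * r * Y" .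
  have "\<bar>e / sqrt k * I2\<bar> = e / sqrt k * \<bar>I2\<bar>" using e sk by (simp add: abs_mult)
  also have "\<dots> \<le> e / sqrt k * ((\<sigma> * p + q) * sqrt k * Y)"
    using I2 e sk by (intro mult_left_mono) auto
  also have "\<dots> = e * (\<sigma> * p + q) * Y" using sk by simp
  also have "\<dots> \<le> 3/4 * (p\<^sup>2 + q\<^sup>2) + Y\<^sup>2 / 4" by (rule cross_term_le_of_small[OF small])
  finally have I2': "\<bar>e / sqrt k * I2\<bar> \<le> 3/4 * (p\<^sup>2 + q\<^sup>2) + Y\<^sup>2 / 4" .
  have "0 \<le> 2 * (r - Y / 2)\<^sup>2" "0 \<le> (r - Y)\<^sup>2" by simp_all
  then have "2 * r * Y \<le> 2 * r\<^sup>2 + Y\<^sup>2 / 2" "2 * r * Y \<le> r\<^sup>2 + Y\<^sup>2"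
    by (simp_all add: power2_eq_square algebra_simps)
  note estimates = this I1'[unfolded abs_le_iff] I2'[unfolded abs_le_iff]
  show "(p\<^sup>2 + q\<^sup>2 + Y\<^sup>2) / 4
      \<le> p\<^sup>2 + q\<^sup>2 + Y\<^sup>2 + 2 / k * I1 + 2 / k * F\<^sup>2 - e / sqrt k * I2"
    using estimates unfolding F2 add_divide_distrib distrib_left by (elim conjE) linarith
  show "p\<^sup>2 + q\<^sup>2 + Y\<^sup>2 + 2 / k * I1 + 2 / k * F\<^sup>2 - e / sqrt k * I2
      \<le> 3 * (p\<^sup>2 + q\<^sup>2 + Y\<^sup>2) + 3 * (F\<^sup>2 / k)"
    using estimates zero_le_power2[of p] zero_le_power2[of q] zero_le_power2[of Y]
    unfolding F2 r2 distrib_left by (elim conjE) linarith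
qed

lemma Lambda_bounds:
  assumes ab: "a < b" and f: "L2fun a b f"
    and \<mu>: "\<forall>s>0. 0 \<le> \<mu> s" "set_integrable lborel {0<..} \<mu>" and \<kappa>: "0 < kappa \<mu>"
    and z: "z \<in> Hspace a b \<mu>" and e: "0 < \<epsilon>" and small: "\<epsilon>\<^sup>2 * ((b - a)\<^sup>2 / 6 + 1) \<le> 3/4"
  shows "Hnsq a b \<mu> z / 4 \<le> Lambda a b f \<mu> \<epsilon> z"
    and "Lambda a b f \<mu> \<epsilon> z \<le> 3 * Hnsq a b \<mu> z + 3 * ((L2nrm a b (Fprim a f))\<^sup>2 / kappa \<mu>)"
proof -
  have H: "Hnsq a b \<mu> z
      = (L2nrm a b (fst z))\<^sup>2 + (nrm1 a b (fst z))\<^sup>2 + (sqrt (Mnsq a b \<mu> (snd z)))\<^sup>2"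
    using Mnsq_nonneg[OF \<mu>(1)] by (simp add: Hnsq_def tnrm1sq_def)
  have "\<epsilon>\<^sup>2 * (((b - a) / sqrt 6)\<^sup>2 + 1) \<le> 3/4"
    using small by (simp add: power_divide)
  note bounds = perturbed_energy_bounds[OF \<kappa> e this Hspace_forcing_term_le[OF f \<mu> z]
      Hspace_coupling_term_le[OF ab \<mu> z]]
  show "Hnsq a b \<mu> z / 4 \<le> Lambda a b f \<mu> \<epsilon> z"
    and "Lambda a b f \<mu> \<epsilon> z \<le> 3 * Hnsq a b \<mu> z + 3 * ((L2nrm a b (Fprim a f))\<^sup>2 / kappa \<mu>)"
    unfolding Lambda_def H by (fact bounds)+
qed

text \<open>The Poincare constant \<open>(b-a)\<^sup>2/6\<close> is worse than the optimal \<open>1/\<lambda>\<^sub>1 = (b-a)\<^sup>2/\<pi>\<^sup>2\<close>;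
  the slack in \<open>3/4\<close> absorbs this as soon as \<open>\<pi>\<^sup>2 \<le> 18\<close>.\<close>
lemma Poincare_smallness_of_less_omega:
  assumes ab: "a < b" and e: "0 < e" "e < 1 / (2 * omega a b)"
  shows "e\<^sup>2 * ((b - a)\<^sup>2 / 6 + 1) \<le> 3/4"
proof -
  define w where "w = omega a b"
  have "0 < lambda1 a b" using ab by (simp add: lambda1_def)
  then have w2: "w\<^sup>2 = 1 + (b - a)\<^sup>2 / pi\<^sup>2" and w: "0 < w"
    using ab by (simp_all add: w_def omega_def lambda1_def field_simps power_divide add_pos_pos)
  have "e * (2 * w) < 1" using e w by (simp add: w_def field_simps)
  then have "(e * (2 * w))\<^sup>2 \<le> 1" using e w by (simp add: abs_square_le_1)
  then have ew: "e\<^sup>2 * w\<^sup>2 \<le> 1/4" by (simp add: power_mult_distrib)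
  have "pi\<^sup>2 \<le> 18"
    using pi_less_4 power_strict_mono[of pi 4 2] by simp
  then have "(b - a)\<^sup>2 / 6 \<le> 3 * ((b - a)\<^sup>2 / pi\<^sup>2)"
    using mult_right_mono[of "pi\<^sup>2" 18 "(b - a)\<^sup>2"] by (simp add: field_simps)
  then have "(b - a)\<^sup>2 / 6 + 1 \<le> 3 * w\<^sup>2" unfolding w2 by simp
  then have "e\<^sup>2 * ((b - a)\<^sup>2 / 6 + 1) \<le> e\<^sup>2 * (3 * w\<^sup>2)"
    by (rule mult_left_mono) simp
  with ew show ?thesis by linarith
qed

lemma cstar_pos:
  assumes "0 < c1" "0 < c2" "0 < c3" "L2nrm a b (Fprim a f) < c1 / sqrt (c2 * c3)"
  shows "0 < cstar a b f c1 c2 c3"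
  using assms by (simp add: cstar_def)

theorem lemma8p2:
  fixes a b :: real and f \<mu> :: "real \<Rightarrow> real" and \<delta> c1 c2 c3 \<epsilon>0 :: real
    and S :: "real \<Rightarrow> (real \<Rightarrow> real) \<times> (real \<Rightarrow> real \<Rightarrow> real)
                    \<Rightarrow> (real \<Rightarrow> real) \<times> (real \<Rightarrow> real \<Rightarrow> real)"
  assumes ab: "a < b"
    and f_L2: "L2fun a b f"
    and mu_nonneg: "\<forall>s>0. \<mu> s \<ge> 0"
    and mu_nonzero: "\<exists>s>0. \<mu> s \<noteq> 0"
    and mu_noninc: "\<forall>s t. 0 < s \<and> s \<le> t \<longrightarrow> \<mu> t \<le> \<mu> s"
    and mu_AC: "\<forall>c d. 0 < c \<and> c \<le> d \<longrightarrow>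
                  set_integrable lborel {c..d} (deriv \<mu>)
                  \<and> \<mu> d - \<mu> c = (LINT s:{c..d}|lborel. deriv \<mu> s)"
    and mu_int: "set_integrable lborel {0<..} \<mu>"
    and kappa_pos: "kappa \<mu> > 0"
    and mu_moment_int: "set_integrable lborel {0<..} (\<lambda>s. s * \<mu> s)"
    and mu_moment: "(LINT s:{0<..}|lborel. s * \<mu> s) = 1"
    and mu_at0: "\<exists>L. (\<mu> \<longlongrightarrow> L) (at_right 0)"
    and delta_pos: "\<delta> > 0"
    and mu_decay: "AE s in lborel. s > 0 \<longrightarrow>
                     \<mu> differentiable (at s) \<and> deriv \<mu> s + \<delta> * \<mu> s \<le> 0"
    and c_pos: "c1 > 0" "c2 > 0" "c3 > 0"
    and eps0: "0 < \<epsilon>0" "\<epsilon>0 < 1 / (2 * omega a b)"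
    and S_id: "\<forall>z\<in>Hspace a b \<mu>. S 0 z = z"
    and S_semigroup: "\<forall>z\<in>Hspace a b \<mu>. \<forall>t\<ge>0. \<forall>s\<ge>0. S (t + s) z = S t (S s z)"
    and S_maps: "\<forall>z\<in>Hspace a b \<mu>. \<forall>t\<ge>0. S t z \<in> Hspace a b \<mu>"
    and diff_ineq: "\<forall>z\<in>Hspace a b \<mu>. \<forall>\<epsilon>. 0 < \<epsilon> \<and> \<epsilon> \<le> \<epsilon>0 \<longrightarrow> (\<forall>t\<ge>0.
         \<exists>L'. ((\<lambda>\<tau>. Lambda a b f \<mu> \<epsilon> (S \<tau> z)) has_real_derivative L') (at t within {0..})
           \<and> L' + \<epsilon> * c1 * Lambda a b f \<mu> \<epsilon> (S t z)
               \<le> c2 * (L2nrm a b (Fprim a f))\<^sup>2 + c3 * \<epsilon>\<^sup>2 * (Lambda a b f \<mu> \<epsilon> (S t z))\<^sup>2)"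
    and F_small: "L2nrm a b (Fprim a f) < c1 / (2 * sqrt (c2 * c3))"
  shows "(\<forall>\<epsilon>. 0 < \<epsilon> \<and> \<epsilon> \<le> \<epsilon>0 \<longrightarrow>
            (\<forall>z\<in>Dset a b f \<mu> c1 c2 c3 \<epsilon>. Hnsq a b \<mu> z \<le> 4 * cstar a b f c1 c2 c3 / \<epsilon>))
         \<and> (\<forall>R. \<exists>\<epsilon>1>0. \<forall>\<B>. \<B> \<subseteq> Hspace a b \<mu> \<and> (\<forall>z\<in>\<B>. Hnsq a b \<mu> z \<le> R) \<longrightarrow>
              (\<forall>\<epsilon>. 0 < \<epsilon> \<and> \<epsilon> \<le> \<epsilon>0 \<and> \<epsilon> \<le> \<epsilon>1 \<longrightarrow> \<B> \<subseteq> Dset a b f \<mu> c1 c2 c3 \<epsilon>))"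
proof -
  let ?F = "L2nrm a b (Fprim a f)" and ?c = "cstar a b f c1 c2 c3"
  have "?F < c1 / sqrt (c2 * c3)"
    using F_small c_pos by (simp add: field_simps)
  then have c: "0 < ?c" by (rule cstar_pos[OF c_pos])
  have small: "\<epsilon>\<^sup>2 * ((b - a)\<^sup>2 / 6 + 1) \<le> 3/4" if "0 < \<epsilon>" "\<epsilon> \<le> \<epsilon>0" for \<epsilon>
    using that eps0 by (intro Poincare_smallness_of_less_omega ab) auto
  note bounds = Lambda_bounds[OF ab f_L2 mu_nonneg mu_int kappa_pos _ _ small]
  show ?thesis
  proof (intro conjI allI impI ballI)
    fix \<epsilon> z assume "0 < \<epsilon> \<and> \<epsilon> \<le> \<epsilon>0" and "z \<in> Dset a b f \<mu> c1 c2 c3 \<epsilon>"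
    then have "Hnsq a b \<mu> z / 4 \<le> Lambda a b f \<mu> \<epsilon> z" "Lambda a b f \<mu> \<epsilon> z \<le> ?c / \<epsilon>"
      using bounds(1)[of z \<epsilon>] by (auto simp: Dset_def)
    then have "Hnsq a b \<mu> z \<le> 4 * (?c / \<epsilon>)" by linarith
    then show "Hnsq a b \<mu> z \<le> 4 * ?c / \<epsilon>" by simp
  next
    fix R :: real
    define K where "K = 3 * \<bar>R\<bar> + 3 * (?F\<^sup>2 / kappa \<mu>) + 1"
    have K: "0 < K" using kappa_pos by (simp add: K_def add_nonneg_pos)
    show "\<exists>\<epsilon>1>0. \<forall>\<B>. \<B> \<subseteq> Hspace a b \<mu> \<and> (\<forall>z\<in>\<B>. Hnsq a b \<mu> z \<le> R) \<longrightarrow>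
        (\<forall>\<epsilon>. 0 < \<epsilon> \<and> \<epsilon> \<le> \<epsilon>0 \<and> \<epsilon> \<le> \<epsilon>1 \<longrightarrow> \<B> \<subseteq> Dset a b f \<mu> c1 c2 c3 \<epsilon>)"
    proof (intro exI[of _ "?c / K"] conjI allI impI subsetI)
      show "0 < ?c / K" using c K by simp
      fix \<B> \<epsilon> z
      assume \<B>: "\<B> \<subseteq> Hspace a b \<mu> \<and> (\<forall>z\<in>\<B>. Hnsq a b \<mu> z \<le> R)"
        and e: "0 < \<epsilon> \<and> \<epsilon> \<le> \<epsilon>0 \<and> \<epsilon> \<le> ?c / K" and "z \<in> \<B>"
      then have z: "z \<in> Hspace a b \<mu>" and "Hnsq a b \<mu> z \<le> R" by auto
      then have "Lambda a b f \<mu> \<epsilon> z \<le> K"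
        using bounds(2)[OF z, of \<epsilon>] e by (simp add: K_def)
      also have "K \<le> ?c / \<epsilon>" using e K by (simp add: field_simps)
      finally show "z \<in> Dset a b f \<mu> c1 c2 c3 \<epsilon>" using z by (simp add: Dset_def)
    qed
  qed
qed

end
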